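(* Let $n,k$ be positive integers with $k$ odd and $\gcd(k,n)=1$, let $d=\frac{3^k+1}{2}$ and $F(x)=x^d$ on $\mathrm{GF}(3^n)$. Then $F$ is almost perfect $c$-nonlinear for $c=-1$.
   Context: For a function $F:\mathrm{GF}(p^n)\to\mathrm{GF}(p^n)$ and $a,b,c\in\mathrm{GF}(p^n)$, let ${}_c\Delta_F(a,b)=\#\{x\in\mathrm{GF}(p^n): F(x+a)-cF(x)=b\}$. The $c$-differential uniformity of $F$ is ${}_c\Delta_F=\max\{{}_c\Delta_F(a,b): a,b\in\mathrm{GF}(p^n),\ \text{and } a\neq 0 \text{ if } c=1\}$. $F$ is almost perfect $c$-nonlinear (AP$c$N) if ${}_c\Delta_F=2$. *)

theory Defs
  imports Main
begin

definition c_diff_count :: "('a::{finite,field} \<Rightarrow> 'a) \<Rightarrow> 'a \<Rightarrow> 'a \<Rightarrow> 'a \<Rightarrow> nat" where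
  "c_diff_count F c a b = card {x. F (x + a) - c * F x = b}"

definition c_diff_uniformity :: "('a::{finite,field} \<Rightarrow> 'a) \<Rightarrow> 'a \<Rightarrow> nat" where
  "c_diff_uniformity F c =
     Max {c_diff_count F c a b | a b. c \<noteq> 1 \<or> a \<noteq> 0}"

definition APcN :: "('a::{finite,field} \<Rightarrow> 'a) \<Rightarrow> 'a \<Rightarrow> bool" where
  "APcN F c \<longleftrightarrow> c_diff_uniformity F c = 2"

end

theory Submission
  imports Defs "HOL-Computational_Algebra.Primes"
begin

text \<open>
  Write q = 3^k and d = (q + 1)/2. For c = -1 the c-differential equation reads
  (x + a)^d + x^d = b, and any two of its solutions satisfy x2 = x1 or x2 = -x1 - a.
  For a \<noteq> 0 pass to GF(3^(2n)) and write x = v^2, x + a = u^2, w = u + v, w' = u - v.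
  Then w w' = a and x = (w' - w)^2, and the Frobenius map of characteristic 3 turns the
  equation into w^(q+1) + w'^(q+1) = -b. As also w^(q+1) w'^(q+1) = a^(q+1), the pair
  {w^(q+1), w'^(q+1)} is determined by b, so after possibly swapping w1 and w1' we get
  w2 = t w1 with t^(q+1) = 1. Because gcd(2k, 2n) = 2 such a t satisfies t^8 = 1, and since
  q + 1 = 4 (mod 8) even t^4 = 1; the two cases t^2 = 1 and t^2 = -1 give the two
  alternatives. For a = 0 the same argument applies to x^d itself. The value 2 is attained
  at a = b = 1 by x = 0 and x = -1.
\<close>

section \<open>Characteristic 3\<close>

lemma of_nat_card_UNIV_eq_0: "of_nat (card (UNIV :: 'a::{finite,ring_1} set)) = (0::'a)"
proof -
  have "(\<Sum>x\<in>UNIV. x + 1) = (\<Sum>x\<in>(UNIV::'a set). x)"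
    by (rule sum.reindex_bij_witness[of _ "\<lambda>x. x - 1" "\<lambda>x. x + 1"]) auto
  then show ?thesis
    by (simp add: sum.distrib)
qed

lemma CHAR_eq_prime:
  assumes "prime p" and "of_nat p = (0::'a::{semiring_1,zero_neq_one})"
  shows "CHAR('a) = p"
proof -
  have "CHAR('a) dvd p"
    using assms(2) by (simp add: of_nat_eq_0_iff_char_dvd)
  then show ?thesis
    using assms(1) CHAR_not_1 by (auto simp: prime_nat_iff)
qed

lemma CHAR_eq_prime_if_card:
  assumes "prime p" and "card (UNIV :: 'a::{finite,field} set) = p ^ n"
  shows "CHAR('a) = p"
proof (rule CHAR_eq_prime[OF assms(1)])
  have "(of_nat p :: 'a) ^ n = 0"
    using of_nat_card_UNIV_eq_0[where 'a='a] assms(2) by simp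
  then show "of_nat p = (0::'a)"
    by simp
qed

lemma CHAR_3_numerals:
  assumes "CHAR('a::ring_1) = 3"
  shows "(2::'a) = - 1" and "(4::'a) = 1" and "(2::'a) \<noteq> 0" and "(- 1::'a) \<noteq> 1"
proof -
  have "(3::'a) = 0"
    using of_nat_CHAR[where 'a='a] assms by simp
  moreover have "(2::'a) = 3 - 1" and "(4::'a) = 3 + 1"
    by simp_all
  ultimately show two: "(2::'a) = - 1" and "(4::'a) = 1"
    by simp_all
  show "(2::'a) \<noteq> 0"
    by (subst two) simp
  show "(- 1::'a) \<noteq> 1"
  proof
    assume "(- 1::'a) = 1"
    have "(3::'a) = 1 + 1 + 1"
      by simp
    also have "\<dots> = 1 + 1 + (- 1)"
      using \<open>(- 1::'a) = 1\<close> by simp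
    finally show False
      using \<open>(3::'a) = 0\<close> by simp
  qed
qed

lemma CHAR_3_sum_of_powers:
  fixes u v :: "'a::comm_ring_1"
  assumes "CHAR('a) = 3"
  shows "u ^ (3 ^ k + 1) + v ^ (3 ^ k + 1) = - ((u + v) ^ (3 ^ k + 1) + (u - v) ^ (3 ^ k + 1))"
proof -
  have frob: "(x + y) ^ 3 ^ k = x ^ 3 ^ k + y ^ 3 ^ k" for x y :: 'a
    using assms by (intro freshmans_dream') simp_all
  have "(u + v) ^ (3 ^ k + 1) + (u - v) ^ (3 ^ k + 1)
      = (u ^ 3 ^ k + v ^ 3 ^ k) * (u + v) + (u ^ 3 ^ k - v ^ 3 ^ k) * (u - v)"
    using frob[of u v] frob[of u "- v"] by simp
  also have "\<dots> = 2 * (u ^ (3 ^ k + 1) + v ^ (3 ^ k + 1))"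
    by (simp add: algebra_simps)
  finally show ?thesis
    using CHAR_3_numerals(1)[OF assms] by simp
qed

section \<open>Roots of unity of order dividing \<open>3^k + 1\<close>, and a rigidity lemma\<close>

lemma power_power_eq_self_mult:
  fixes x :: "'a::monoid_mult"
  assumes "x ^ p ^ a = x"
  shows "x ^ p ^ (a * c) = x"
proof (induction c)
  case (Suc c)
  then show ?case
    by (metis assms mult_Suc_right power_add power_mult)
qed simp

lemma power_power_eq_self_gcd:
  fixes x :: "'a::monoid_mult"
  assumes a: "x ^ p ^ a = x" and b: "x ^ p ^ b = x" and "a \<noteq> 0"
  shows "x ^ p ^ gcd a b = x"
proof -
  obtain u v where uv: "a * u = b * v + gcd a b"
    using bezout_nat[OF \<open>a \<noteq> 0\<close>] by blast
  have "x = x ^ p ^ (a * u)"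
    using power_power_eq_self_mult[OF a] by simp
  also have "\<dots> = (x ^ p ^ (b * v)) ^ p ^ gcd a b"
    by (simp add: uv power_add power_mult)
  also have "\<dots> = x ^ p ^ gcd a b"
    using power_power_eq_self_mult[OF b] by simp
  finally show ?thesis ..
qed

lemma three_power_odd_mod_8:
  assumes "odd k"
  shows "(3::nat) ^ k mod 8 = 3"
proof -
  obtain m where "k = Suc (2 * m)"
    using assms oddE by fastforce
  then have "(3::nat) ^ k = 3 * 9 ^ m"
    by (simp add: power_mult)
  moreover have "(9::nat) ^ m mod 8 = 1"
    by (induction m) (simp_all add: mod_mult_right_eq[of 9, symmetric])
  ultimately show ?thesis
    using mod_mult_right_eq[of "3::nat" "9 ^ m" 8] by simp
qed

lemma three_power_odd_Suc:
  assumes "odd k"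
  shows "(3::nat) ^ k + 1 = 8 * (3 ^ k div 8) + 4"
  using three_power_odd_mod_8[OF assms] div_mult_mod_eq[of "(3::nat) ^ k" 8] by linarith

lemma three_power_double: "(3::nat) ^ (2 * n) = (3 ^ n)\<^sup>2"
  unfolding mult.commute[of 2 n] power_mult ..

lemma power_4_eq_1_if_power_three_power_Suc_eq_1:
  fixes t :: "'a::field"
  assumes fix2n: "t ^ 3 ^ (2 * n) = t" and root: "t ^ (3 ^ k + 1) = 1"
    and "odd k" and "coprime k n"
  shows "t ^ 4 = 1"
proof -
  have "t \<noteq> 0"
    using root by (cases "t = 0") simp_all
  have tk: "t ^ 3 ^ k = inverse t"
    using root \<open>t \<noteq> 0\<close> by (simp add: field_simps)
  have "t ^ 3 ^ (2 * k) = (t ^ 3 ^ k) ^ 3 ^ k"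
    by (simp add: mult_2 power_add power_mult)
  also have "\<dots> = t"
    by (simp add: tk power_inverse)
  finally have "t ^ 3 ^ (2 * k) = t" .
  moreover have "gcd (2 * k) (2 * n) = 2"
    using \<open>coprime k n\<close> by (simp add: gcd_mult_distrib_nat[symmetric])
  ultimately have "t ^ 3 ^ 2 = t"
    using power_power_eq_self_gcd[OF _ fix2n] \<open>odd k\<close> by fastforce
  then have "t ^ 8 * t = 1 * t"
    by (simp flip: power_Suc2)
  then have "t ^ 8 = 1"
    using \<open>t \<noteq> 0\<close> by simp
  then have "t ^ 4 = (t ^ 8) ^ (3 ^ k div 8) * t ^ 4"
    by simp
  also have "\<dots> = t ^ (3 ^ k + 1)"
    by (simp only: three_power_odd_Suc[OF \<open>odd k\<close>] power_add power_mult)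
  finally show ?thesis
    using root by simp
qed

lemma eq_fourth_root_times_if_power_eq:
  fixes z1 z2 :: "'a::field"
  assumes fix2n: "\<And>t::'a. t ^ 3 ^ (2 * n) = t" and k: "odd k" "coprime k n"
    and eq: "z1 ^ (3 ^ k + 1) = z2 ^ (3 ^ k + 1)"
  shows "\<exists>t. t ^ 4 = 1 \<and> z2 = t * z1"
proof (cases "z1 = 0")
  case True
  then show ?thesis
    using eq by (intro exI[of _ 1]) simp
next
  case False
  have "(z2 / z1) ^ (3 ^ k + 1) = 1"
    unfolding power_divide eq[symmetric] using False by simp
  then have "(z2 / z1) ^ 4 = 1"
    by (rule power_4_eq_1_if_power_three_power_Suc_eq_1[OF fix2n _ k])
  then show ?thesis
    using False by (intro exI[of _ "z2 / z1"]) simp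
qed

lemma eq_or_eq_neg_if_half_power_eq:
  fixes x1 x2 :: "'a::field"
  assumes fix2n: "\<And>t::'a. t ^ 3 ^ (2 * n) = t" and k: "odd k" "coprime k n"
    and d: "2 * d = 3 ^ k + 1" and eq: "x1 ^ d = x2 ^ d"
  shows "x2 = x1 \<or> x2 = - x1"
proof -
  have "x1 ^ (3 ^ k + 1) = x2 ^ (3 ^ k + 1)"
    unfolding d[symmetric] mult.commute[of 2 d] power_mult eq ..
  then obtain t where "t ^ 4 = 1" and x2: "x2 = t * x1"
    using eq_fourth_root_times_if_power_eq[OF fix2n k] by blast
  have "d = 4 * (3 ^ k div 8) + 2"
    using three_power_odd_Suc[OF \<open>odd k\<close>] d by simp
  then have "t ^ d = t\<^sup>2"
    using \<open>t ^ 4 = 1\<close> by (simp only: power_add power_mult) simp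
  then have "x1 ^ d = t\<^sup>2 * x1 ^ d"
    using eq x2 by (simp add: power_mult_distrib)
  then have "x1 ^ d = 0 \<or> t\<^sup>2 = 1"
    by simp
  then show ?thesis
    using x2 by (auto simp: power2_eq_1_iff)
qed

lemma eq_if_same_sum_and_product:
  fixes a b c d :: "'a::idom"
  assumes "a + b = c + d" and "a * b = c * d"
  shows "c = a \<or> c = b"
proof -
  have "(c - a) * (c - b) = c * c - c * (a + b) + a * b"
    by (simp add: algebra_simps)
  also have "\<dots> = 0"
    using assms by (simp add: algebra_simps)
  finally show ?thesis
    by simp
qed

lemma square_diff_if_fourth_root:
  fixes w1 w1' w2 w2' t :: "'a::field"
  assumes prod: "w2 * w2' = w1 * w1'" and "w1 \<noteq> 0" and w2: "w2 = t * w1" and "t ^ 4 = 1"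
  shows "(w2' - w2)\<^sup>2 = (w1' - w1)\<^sup>2 \<or> (w2' - w2)\<^sup>2 = - (w1' + w1)\<^sup>2"
proof -
  have "(t ^ 2 - 1) * (t ^ 2 + 1) = 0"
    using \<open>t ^ 4 = 1\<close> by (simp add: algebra_simps flip: power_add)
  then have t2: "t ^ 2 = 1 \<or> t ^ 2 = - 1"
    by (auto simp: eq_neg_iff_add_eq_0)
  have "t * w2' = w1'"
    using prod w2 \<open>w1 \<noteq> 0\<close> by (simp add: mult.assoc mult.left_commute[of w1])
  then have key: "t ^ 2 * (w2' - w2)\<^sup>2 = (w1' - t ^ 2 * w1)\<^sup>2"
    by (metis w2 power2_eq_square power_mult_distrib right_diff_distrib mult.assoc)
  from t2 show ?thesis
  proof
    assume "t ^ 2 = - 1"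
    then have "- (w2' - w2)\<^sup>2 = (w1' + w1)\<^sup>2"
      using key by simp
    then show ?thesis
      by (metis minus_minus)
  qed (use key in simp)
qed

lemma square_diff_rigidity:
  fixes w1 w1' w2 w2' :: "'a::field"
  assumes fix2n: "\<And>t::'a. t ^ 3 ^ (2 * n) = t" and k: "odd k" "coprime k n"
    and prod: "w2 * w2' = w1 * w1'" and "w1 * w1' \<noteq> 0"
    and sum: "w1 ^ (3 ^ k + 1) + w1' ^ (3 ^ k + 1) = w2 ^ (3 ^ k + 1) + w2' ^ (3 ^ k + 1)"
  shows "(w2' - w2)\<^sup>2 = (w1' - w1)\<^sup>2 \<or> (w2' - w2)\<^sup>2 = - (w1' + w1)\<^sup>2"
proof -
  have "w1 ^ (3 ^ k + 1) * w1' ^ (3 ^ k + 1) = w2 ^ (3 ^ k + 1) * w2' ^ (3 ^ k + 1)"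
    by (simp only: prod flip: power_mult_distrib)
  with sum have "w2 ^ (3 ^ k + 1) = w1 ^ (3 ^ k + 1) \<or> w2 ^ (3 ^ k + 1) = w1' ^ (3 ^ k + 1)"
    by (rule eq_if_same_sum_and_product)
  then show ?thesis
  proof
    assume "w2 ^ (3 ^ k + 1) = w1 ^ (3 ^ k + 1)"
    then obtain t where "t ^ 4 = 1" "w2 = t * w1"
      using eq_fourth_root_times_if_power_eq[OF fix2n k] by metis
    then show ?thesis
      using square_diff_if_fourth_root[OF prod] \<open>w1 * w1' \<noteq> 0\<close> by simp
  next
    assume "w2 ^ (3 ^ k + 1) = w1' ^ (3 ^ k + 1)"
    then obtain t where "t ^ 4 = 1" "w2 = t * w1'"
      using eq_fourth_root_times_if_power_eq[OF fix2n k] by metis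
    moreover have "w2 * w2' = w1' * w1"
      using prod by (simp add: mult.commute)
    ultimately show ?thesis
      using square_diff_if_fourth_root[of w2 w2' w1' w1] \<open>w1 * w1' \<noteq> 0\<close>
      by (simp add: power2_commute add.commute)
  qed
qed

section \<open>A quadratic extension of a finite field\<close>

lemma card_square_roots_le_2: "card {x::'a::idom. x * x = s} \<le> 2"
proof (cases "\<exists>r. s = r * r")
  case True
  then obtain r where "s = r * r"
    by blast
  then have "{x. x * x = s} \<subseteq> {r, - r}"
    by (auto simp: square_eq_iff)
  then have "card {x. x * x = s} \<le> card {r, - r}"
    by (rule card_mono[rotated]) simp
  also have "\<dots> \<le> 2"
    by (simp add: card_insert_if)
  finally show ?thesis .
next
  case False
  then have "{x. x * x = s} = {}"
    by auto
  then show ?thesis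
    by simp
qed

lemma card_UNIV_le_card_squares:
  "card (UNIV :: 'a::{finite,field} set) + 1 \<le> 2 * card (range (\<lambda>x::'a. x * x))"
proof -
  let ?S = "range (\<lambda>x::'a. x * x)"
  have "0 \<in> ?S"
    by (rule range_eqI[of _ _ 0]) simp
  then have "card ?S \<ge> 1"
    by (simp add: Suc_le_eq card_gt_0_iff)
  have "card (UNIV :: 'a set) = card (\<Union>s\<in>?S. {x. x * x = s})"
    by (rule arg_cong[of _ _ card]) blast
  also have "\<dots> \<le> (\<Sum>s\<in>?S. card {x. x * x = s})"
    by (rule card_UN_le) simp
  also have "\<dots> = card {x::'a. x * x = 0} + (\<Sum>s\<in>?S - {0}. card {x. x * x = s})"
    using \<open>0 \<in> ?S\<close> by (rule sum.remove[rotated]) simp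
  also have "\<dots> \<le> 1 + card (?S - {0}) * 2"
  proof (rule add_mono)
    have "{x::'a. x * x = 0} = {0}"
      by auto
    then show "card {x::'a. x * x = 0} \<le> 1"
      by simp
    show "(\<Sum>s\<in>?S - {0}. card {x. x * x = s}) \<le> card (?S - {0}) * 2"
      using sum_bounded_above[of "?S - {0}" "\<lambda>s. card {x. x * x = s}" 2]
        card_square_roots_le_2[where 'a='a] by simp
  qed
  also have "\<dots> = 2 * card ?S - 1"
    using \<open>0 \<in> ?S\<close> \<open>card ?S \<ge> 1\<close> by (simp add: card_Diff_singleton)
  finally show ?thesis
    using \<open>card ?S \<ge> 1\<close> by linarith
qed

lemma squares_inter_nonsquare_times_squares:
  fixes \<delta> :: "'a::field"
  assumes nonsq: "\<forall>x. x * x \<noteq> \<delta>"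
  shows "range (\<lambda>x::'a. x * x) \<inter> (\<lambda>y. \<delta> * y) ` range (\<lambda>x. x * x) \<subseteq> {0}"
proof
  fix z
  assume "z \<in> range (\<lambda>x::'a. x * x) \<inter> (\<lambda>y. \<delta> * y) ` range (\<lambda>x. x * x)"
  then obtain a b where a: "z = a * a" and b: "z = \<delta> * (b * b)"
    by blast
  show "z \<in> {0}"
  proof (rule ccontr)
    assume "z \<notin> {0}"
    then have "b \<noteq> 0"
      using b by auto
    then have "(a / b) * (a / b) = \<delta>"
      using a b by (simp add: field_simps)
    then show False
      using nonsq by blast
  qed
qed

lemma square_or_nonsquare_times_square:
  fixes r \<delta> :: "'a::{finite,field}"
  assumes nonsq: "\<forall>x. x * x \<noteq> \<delta>"
  shows "\<exists>a. r = a * a \<or> r = \<delta> * (a * a)"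
proof -
  let ?S = "range (\<lambda>x::'a. x * x)"
  let ?T = "(\<lambda>y. \<delta> * y) ` ?S"
  have "\<delta> \<noteq> 0"
    using nonsq by (metis mult_zero_left)
  then have "card ?T = card ?S"
    by (intro card_image) (simp add: inj_on_def)
  have "card (?S \<inter> ?T) \<le> card {0::'a}"
    using squares_inter_nonsquare_times_squares[OF nonsq] by (rule card_mono[rotated]) simp
  then have "card (UNIV :: 'a set) \<le> card (?S \<union> ?T)"
    using card_UNIV_le_card_squares[where 'a='a] card_Un_Int[of ?S ?T] \<open>card ?T = card ?S\<close>
    by simp
  then have "?S \<union> ?T = UNIV"
    by (intro card_seteq) simp_all
  then have "r \<in> ?S \<union> ?T"
    by simp
  then show ?thesis
    by blast
qed

text \<open>
  \<open>'a qext\<close> is \<open>'a[X]/(X^2 + X - qext_const)\<close>, with \<open>QExt a b\<close> standing for \<open>a + b X\<close>.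
  The polynomial has no root because \<open>x \<mapsto> x^2 + x\<close> identifies \<open>0\<close> and \<open>-1\<close>, hence is not
  surjective; this works in every characteristic, so \<open>'a qext\<close> is a field for every finite
  field \<open>'a\<close>.
\<close>

definition qext_const :: "'a::{finite,field}" where
  "qext_const = (SOME c. \<forall>x. x * x + x \<noteq> c)"

lemma qext_const_not_root: "x * x + x \<noteq> (qext_const :: 'a::{finite,field})"
proof -
  have "\<not> inj (\<lambda>x::'a. x * x + x)"
  proof
    assume "inj (\<lambda>x::'a. x * x + x)"
    moreover have "(0::'a) * 0 + 0 = (- 1) * (- 1) + (- 1)"
      by simp
    ultimately have "(0::'a) = - 1"
      by (rule injD)
    then show False
      by simp
  qed
  then have "\<not> surj (\<lambda>x::'a. x * x + x)"
    using finite_UNIV_surj_inj[OF finite_UNIV] by blast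
  then have "\<exists>c::'a. \<forall>x. x * x + x \<noteq> c"
    by (auto simp: surj_def eq_commute)
  then have "\<forall>x. x * x + x \<noteq> (qext_const :: 'a)"
    unfolding qext_const_def by (rule someI_ex)
  then show ?thesis ..
qed

codatatype 'a qext = QExt (qre: 'a) (qim: 'a)

lemma qext_eq_iff: "z = w \<longleftrightarrow> qre z = qre w \<and> qim z = qim w"
  by (cases z, cases w) simp

definition qext_norm :: "'a::{finite,field} qext \<Rightarrow> 'a" where
  "qext_norm z = qre z * qre z - qre z * qim z - qext_const * qim z * qim z"

lemma qext_norm_eq_0_iff: "qext_norm z = 0 \<longleftrightarrow> qre z = 0 \<and> qim z = 0"
proof
  assume N: "qext_norm z = 0"
  show "qre z = 0 \<and> qim z = 0"
  proof (cases "qim z = 0")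
    case False
    then have "(- qre z / qim z) * (- qre z / qim z) + (- qre z / qim z) = qext_const"
      using N by (simp add: qext_norm_def field_simps)
    then show ?thesis
      using qext_const_not_root by blast
  qed (use N in \<open>simp add: qext_norm_def\<close>)
qed (simp add: qext_norm_def)

instantiation qext :: ("{finite,field}") field
begin

primcorec zero_qext where "qre 0 = 0" | "qim 0 = 0"
primcorec one_qext where "qre 1 = 1" | "qim 1 = 0"
primcorec plus_qext where "qre (z + w) = qre z + qre w" | "qim (z + w) = qim z + qim w"
primcorec uminus_qext where "qre (- z) = - qre z" | "qim (- z) = - qim z"
primcorec minus_qext where "qre (z - w) = qre z - qre w" | "qim (z - w) = qim z - qim w"
primcorec times_qext
  where "qre (z * w) = qre z * qre w + qext_const * qim z * qim w"
  | "qim (z * w) = qre z * qim w + qim z * qre w - qim z * qim w"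
primcorec inverse_qext
  where "qre (inverse z) = (qre z - qim z) / qext_norm z"
  | "qim (inverse z) = - qim z / qext_norm z"

definition "z div w = z * inverse w" for z w :: "'a qext"

instance
proof
  fix z :: "'a qext"
  assume "z \<noteq> 0"
  then have N: "qext_norm z \<noteq> 0"
    by (simp add: qext_norm_eq_0_iff qext_eq_iff)
  have "qre (inverse z * z)
      = (qre z * qre z - qre z * qim z - qext_const * qim z * qim z) / qext_norm z"
    by (simp add: add_divide_distrib diff_divide_distrib algebra_simps)
  also have "\<dots> = 1"
    using N unfolding qext_norm_def by simp
  finally have "qre (inverse z * z) = 1" .
  moreover have "qim (inverse z * z) = 0"
    by (simp add: add_divide_distrib diff_divide_distrib algebra_simps)
  ultimately show "inverse z * z = 1"
    by (simp add: qext_eq_iff)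
qed (simp_all add: qext_eq_iff divide_qext_def algebra_simps)

end

lemma bij_qext_pairs: "bij_betw (\<lambda>z. (qre z, qim z)) UNIV (UNIV \<times> UNIV)"
  by (rule bij_betw_byWitness[where f' = "\<lambda>(a, b). QExt a b"]) auto

instance qext :: (finite) finite
proof
  show "finite (UNIV :: 'a qext set)"
    using bij_betw_finite[OF bij_qext_pairs[where 'a='a]] by simp
qed

lemma card_UNIV_qext: "card (UNIV :: 'a qext set) = card (UNIV :: 'a set) ^ 2"
  using bij_betw_same_card[OF bij_qext_pairs[where 'a='a]]
  by (simp only: card_cartesian_product power2_eq_square)

instance qext :: ("{finite,field}") finite_field
  by (rule finite_fieldI) simp

definition qext_of :: "'a::{finite,field} \<Rightarrow> 'a qext" where
  "qext_of a = QExt a 0"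

lemma qext_of_eq_iff [simp]: "qext_of a = qext_of b \<longleftrightarrow> a = b"
  by (simp add: qext_of_def)

lemma qext_of_eq_0_iff [simp]: "qext_of a = 0 \<longleftrightarrow> a = 0"
  by (simp add: qext_of_def qext_eq_iff)

lemma qext_of_simps [simp]:
  "qre (qext_of a) = a" "qim (qext_of a) = 0"
  "qext_of 0 = 0" "qext_of 1 = 1"
  "qext_of (a + b) = qext_of a + qext_of b" "qext_of (a * b) = qext_of a * qext_of b"
  "qext_of (- a) = - qext_of a" "qext_of (a - b) = qext_of a - qext_of b"
  by (simp_all add: qext_of_def qext_eq_iff)

lemma qext_of_power [simp]: "qext_of (a ^ m) = qext_of a ^ m"
  by (induction m) simp_all

lemma of_nat_qext: "of_nat m = qext_of (of_nat m)"
  by (induction m) simp_all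

lemma CHAR_qext [simp]: "CHAR('a::{finite,field} qext) = CHAR('a)"
proof (rule CHAR_eqI)
  show "of_nat CHAR('a) = (0 :: 'a qext)"
    by (simp add: of_nat_qext)
next
  fix m
  assume "of_nat m = (0 :: 'a qext)"
  then have "of_nat m = (0 :: 'a)"
    by (simp add: of_nat_qext[of m])
  then show "CHAR('a) dvd m"
    by (simp add: of_nat_eq_0_iff_char_dvd)
qed

text \<open>\<open>'a\<close> has sort \<open>{finite,field}\<close> rather than \<open>finite_field\<close>, so Fermat's little theorem is
  pulled back from the extension.\<close>

lemma power_card_UNIV_square_eq_self:
  fixes x :: "'a::{finite,field}"
  shows "x ^ card (UNIV :: 'a set) ^ 2 = x"
proof -
  have "qext_of (x ^ card (UNIV :: 'a set) ^ 2) = qext_of x ^ card (UNIV :: 'a qext set)"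
    by (simp add: card_UNIV_qext)
  also have "\<dots> = qext_of x"
    by (rule finite_field_power_card_eq_same)
  finally show ?thesis
    by (simp only: qext_of_eq_iff)
qed

text \<open>In odd characteristic the discriminant \<open>4 c + 1\<close> of \<open>X^2 + X - c\<close> is a non-square in
  \<open>'a\<close>, with square root \<open>1 + 2 X\<close> in \<open>'a qext\<close>; so every element of \<open>'a\<close> becomes a square.\<close>

lemma qext_discriminant_nonsquare:
  assumes "(2::'a::{finite,field}) \<noteq> 0"
  shows "x * x \<noteq> 4 * qext_const + (1::'a)"
proof
  assume x: "x * x = 4 * qext_const + 1"
  define y where "y = (x - 1) / 2"
  have "2 * y + 1 = x"
    using assms by (simp add: y_def field_simps)
  have "4 * (y * y + y) = (2 * y + 1) * (2 * y + 1) - 1"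
    by (simp add: algebra_simps)
  also have "\<dots> = 4 * qext_const"
    using x by (simp add: \<open>2 * y + 1 = x\<close>)
  finally have "4 * (y * y + y) = 4 * qext_const" .
  moreover have "(4::'a) \<noteq> 0"
    using assms mult_eq_0_iff[of "2::'a" 2] by simp
  ultimately have "y * y + y = qext_const"
    using mult_cancel_left[of "4::'a" "y * y + y" qext_const] by blast
  then show False
    using qext_const_not_root by blast
qed

lemma qext_of_is_square:
  assumes "(2::'a::{finite,field}) \<noteq> 0"
  shows "\<exists>u. u * u = qext_of (r :: 'a)"
proof -
  let ?\<delta> = "4 * qext_const + 1 :: 'a"
  obtain a where "r = a * a \<or> r = ?\<delta> * (a * a)"
    using square_or_nonsquare_times_square qext_discriminant_nonsquare[OF assms] by blast
  then show ?thesis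
  proof
    assume "r = a * a"
    then have "qext_of a * qext_of a = qext_of r"
      by simp
    then show ?thesis ..
  next
    assume r: "r = ?\<delta> * (a * a)"
    define w :: "'a qext" where "w = QExt 1 2"
    have w: "w * w = qext_of ?\<delta>"
      by (simp add: w_def qext_eq_iff algebra_simps)
    have "(qext_of a * w) * (qext_of a * w) = qext_of (a * a) * (w * w)"
      by (simp add: mult_ac)
    also have "\<dots> = qext_of r"
      unfolding w r by (simp add: mult_ac)
    finally show ?thesis ..
  qed
qed

lemma qext_parametrization:
  fixes x a :: "'a::{finite,field}"
  assumes "CHAR('a) = 3" and d: "2 * d = 3 ^ k + 1"
  shows "\<exists>w w' :: 'a qext. w * w' = qext_of a \<and> (w' - w)\<^sup>2 = qext_of x
           \<and> (w' + w)\<^sup>2 = qext_of (x + a)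
           \<and> qext_of ((x + a) ^ d + x ^ d) = - (w ^ (3 ^ k + 1) + w' ^ (3 ^ k + 1))"
proof -
  have four: "(4::'a qext) = 1"
    using CHAR_3_numerals(2)[where 'a="'a qext"] assms(1) by simp
  obtain u where u: "u * u = qext_of (x + a)"
    using qext_of_is_square[OF CHAR_3_numerals(3)[OF assms(1)]] by blast
  obtain v where v: "v * v = qext_of x"
    using qext_of_is_square[OF CHAR_3_numerals(3)[OF assms(1)]] by blast
  have half_power: "qext_of (y ^ d) = z ^ (3 ^ k + 1)"
    if "z * z = qext_of y" for y :: 'a and z :: "'a qext"
  proof -
    have "qext_of (y ^ d) = (z\<^sup>2) ^ d"
      by (simp add: that power2_eq_square)
    also have "\<dots> = z ^ (3 ^ k + 1)"
      by (simp only: power_mult[symmetric] d)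
    finally show ?thesis .
  qed
  show ?thesis
  proof (intro exI conjI)
    show "(u + v) * (u - v) = qext_of a"
      using u v by (simp add: algebra_simps)
    show "((u - v) - (u + v))\<^sup>2 = qext_of x"
      using v four by (simp add: power2_eq_square algebra_simps)
    show "((u - v) + (u + v))\<^sup>2 = qext_of (x + a)"
      using u four by (simp add: power2_eq_square algebra_simps)
    show "qext_of ((x + a) ^ d + x ^ d) = - ((u + v) ^ (3 ^ k + 1) + (u - v) ^ (3 ^ k + 1))"
      using half_power[OF u] half_power[OF v] CHAR_3_sum_of_powers[of u k v] assms by simp
  qed
qed

section \<open>The equation \<open>(x + a)^d + x^d = b\<close>\<close>

lemma solutions_eq_or_reflected_nonzero:
  fixes a x1 x2 :: "'a::{finite,field}"
  assumes card: "card (UNIV :: 'a set) = 3 ^ n" and k: "odd k" "coprime k n"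
    and d: "2 * d = 3 ^ k + 1" and "a \<noteq> 0"
    and eq: "(x1 + a) ^ d + x1 ^ d = (x2 + a) ^ d + x2 ^ d"
  shows "x2 = x1 \<or> x2 = - x1 - a"
proof -
  have CHAR: "CHAR('a) = 3"
    using CHAR_eq_prime_if_card[OF _ card] by simp
  obtain w1 w1' where w1: "w1 * w1' = qext_of a" "(w1' - w1)\<^sup>2 = qext_of x1"
    "(w1' + w1)\<^sup>2 = qext_of (x1 + a)"
    "qext_of ((x1 + a) ^ d + x1 ^ d) = - (w1 ^ (3 ^ k + 1) + w1' ^ (3 ^ k + 1))"
    using qext_parametrization[OF CHAR d, where x = x1 and a = a] by blast
  obtain w2 w2' where w2: "w2 * w2' = qext_of a" "(w2' - w2)\<^sup>2 = qext_of x2"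
    "qext_of ((x2 + a) ^ d + x2 ^ d) = - (w2 ^ (3 ^ k + 1) + w2' ^ (3 ^ k + 1))"
    using qext_parametrization[OF CHAR d, where x = x2 and a = a] by blast
  have fix2n: "t ^ 3 ^ (2 * n) = t" for t :: "'a qext"
    using finite_field_power_card_eq_same[of t]
    by (simp only: card_UNIV_qext card three_power_double)
  have prod: "w2 * w2' = w1 * w1'" and "w1 * w1' \<noteq> 0"
    using w1(1) w2(1) \<open>a \<noteq> 0\<close> by simp_all
  have "- (w1 ^ (3 ^ k + 1) + w1' ^ (3 ^ k + 1)) = - (w2 ^ (3 ^ k + 1) + w2' ^ (3 ^ k + 1))"
    unfolding w1(4)[symmetric] w2(3)[symmetric] eq ..
  then have "w1 ^ (3 ^ k + 1) + w1' ^ (3 ^ k + 1) = w2 ^ (3 ^ k + 1) + w2' ^ (3 ^ k + 1)"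
    by (rule neg_equal_iff_equal[THEN iffD1])
  then have "(w2' - w2)\<^sup>2 = (w1' - w1)\<^sup>2 \<or> (w2' - w2)\<^sup>2 = - (w1' + w1)\<^sup>2"
    by (rule square_diff_rigidity[OF fix2n k prod \<open>w1 * w1' \<noteq> 0\<close>])
  moreover have "- qext_of (x1 + a) = qext_of (- x1 - a)"
    by simp
  ultimately have "qext_of x2 = qext_of x1 \<or> qext_of x2 = qext_of (- x1 - a)"
    unfolding w1(2,3) w2(2) by simp
  then show ?thesis
    by (simp only: qext_of_eq_iff)
qed

lemma solutions_eq_or_reflected:
  fixes a x1 x2 :: "'a::{finite,field}"
  assumes card: "card (UNIV :: 'a set) = 3 ^ n" and k: "odd k" "coprime k n"
    and d: "2 * d = 3 ^ k + 1"
    and eq: "(x1 + a) ^ d + x1 ^ d = (x2 + a) ^ d + x2 ^ d"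
  shows "x2 = x1 \<or> x2 = - x1 - a"
proof (cases "a = 0")
  case True
  have "CHAR('a) = 3"
    using CHAR_eq_prime_if_card[OF _ card] by simp
  then have "(2::'a) \<noteq> 0"
    by (rule CHAR_3_numerals(3))
  with eq True have "x1 ^ d = x2 ^ d"
    by (simp flip: mult_2)
  moreover have "t ^ 3 ^ (2 * n) = t" for t :: 'a
    using power_card_UNIV_square_eq_self[of t] by (simp only: card three_power_double)
  ultimately have "x2 = x1 \<or> x2 = - x1"
    using eq_or_eq_neg_if_half_power_eq[OF _ k d] by blast
  then show ?thesis
    using True by simp
qed (use solutions_eq_or_reflected_nonzero[OF assms(1-4)] eq in blast)

lemma card_solutions_le_2:
  fixes a b :: "'a::{finite,field}"
  assumes "card (UNIV :: 'a set) = 3 ^ n" and "odd k" and "coprime k n" and "2 * d = 3 ^ k + 1"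
  shows "card {x. (x + a) ^ d + x ^ d = b} \<le> 2"
proof (cases "\<exists>x0. (x0 + a) ^ d + x0 ^ d = b")
  case True
  then obtain x0 where x0: "(x0 + a) ^ d + x0 ^ d = b"
    by blast
  have "{x. (x + a) ^ d + x ^ d = b} \<subseteq> {x0, - x0 - a}"
    using solutions_eq_or_reflected[OF assms] x0 by blast
  then have "card {x. (x + a) ^ d + x ^ d = b} \<le> card {x0, - x0 - a}"
    by (rule card_mono[rotated]) simp
  also have "\<dots> \<le> 2"
    by (simp add: card_insert_if)
  finally show ?thesis .
qed simp

lemma two_le_card_solutions_at_one:
  assumes "even d" and "d \<noteq> 0"
  shows "2 \<le> card {x::'a::{finite,field}. (x + 1) ^ d + x ^ d = 1}"
proof -
  have "{0, - 1} \<subseteq> {x::'a. (x + 1) ^ d + x ^ d = 1}"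
    using assms by (simp add: zero_power)
  then have "card {0::'a, - 1} \<le> card {x::'a. (x + 1) ^ d + x ^ d = 1}"
    by (rule card_mono[rotated]) simp
  then show ?thesis
    by simp
qed

section \<open>The \<open>c\<close>-differential uniformity\<close>

lemma c_diff_uniformity_eqI:
  fixes F :: "'a::{finite,field} \<Rightarrow> 'a"
  assumes le: "\<And>a' b'. c \<noteq> 1 \<or> a' \<noteq> 0 \<Longrightarrow> c_diff_count F c a' b' \<le> m"
    and "c \<noteq> 1 \<or> a \<noteq> 0" and "c_diff_count F c a b = m"
  shows "c_diff_uniformity F c = m"
proof -
  let ?M = "{c_diff_count F c a b | a b. c \<noteq> 1 \<or> a \<noteq> 0}"
  have "?M \<subseteq> {..m}"
    using le by auto
  moreover have "m \<in> ?M"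
    using assms(2,3) by blast
  ultimately have "Max ?M = m"
    by (intro Max_eqI) (auto intro: finite_subset)
  then show ?thesis
    unfolding c_diff_uniformity_def .
qed

theorem theorem4:
  fixes n k :: nat
    and F :: "'a::{finite,field} \<Rightarrow> 'a"
  assumes "card (UNIV :: 'a set) = 3 ^ n"
    and "n > 0" and "k > 0" and "odd k" and "coprime k n"
    and "\<And>x. F x = x ^ ((3 ^ k + 1) div 2)"
  shows "APcN F (-1)"
proof -
  note card = assms(1) and k = assms(4,5)
  define d :: nat where "d = (3 ^ k + 1) div 2"
  have d: "2 * d = 3 ^ k + 1" and d4: "d = 4 * (3 ^ k div 8) + 2"
    using three_power_odd_Suc[OF \<open>odd k\<close>] unfolding d_def by simp_all
  from d4 have "even d" and "d \<noteq> 0"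
    by simp_all
  have count: "c_diff_count F (- 1) a b = card {x. (x + a) ^ d + x ^ d = b}" for a b
    unfolding c_diff_count_def d_def using assms(6) by simp
  have le: "c_diff_count F (- 1) a b \<le> 2" for a b
    unfolding count by (rule card_solutions_le_2[OF card k d])
  have attained: "c_diff_count F (- 1) 1 1 = 2"
    using le[of 1 1] two_le_card_solutions_at_one[OF \<open>even d\<close> \<open>d \<noteq> 0\<close>, where 'a='a]
    unfolding count by (rule antisym)
  have "CHAR('a) = 3"
    using CHAR_eq_prime_if_card[OF _ card] by simp
  then have "(- 1 :: 'a) \<noteq> 1"
    by (rule CHAR_3_numerals(4))
  then show ?thesis
    unfolding APcN_def
    by (intro c_diff_uniformity_eqI[where a = 1 and b = 1] le attained) simp
qed

end
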